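(* Let $q$ be a power of $2$. In $\mathrm{AG}(3,q^2)$ with affine coordinates $x,y,z$, homogeneous coordinates $J,X,Y,Z$ and plane at infinity $\Sigma_\infty:J=0$, let $\mathcal H$ be the Hermitian surface $z^q+z=x^{q+1}+y^{q+1}$, let $P_\infty=(0,0,0,1)$, and let $\mathcal Q$ be a hyperbolic quadric with affine equation $z=ax^2+by^2+cxy+dx+ey+f$, $a,\dots,f\in\mathrm{GF}(q^2)$, such that $\mathcal Q\cap\mathcal H\cap\Sigma_\infty=\{P_\infty\}$. Let $\Xi_\infty$ be the quadric of $\mathrm{PG}(3,q)$ defined below. If $\Xi_\infty$ has rank $2$, then $\Xi_\infty$ is a line, i.e. it is the union of two conjugate planes defined over $\mathrm{GF}(q^2)$ but not over $\mathrm{GF}(q)$, whose set of points in $\mathrm{PG}(3,q)$ is a line.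
   Context: Fix $\nu\in\mathrm{GF}(q)\setminus\{1\}$ with absolute trace $\mathrm{Tr}_q(\nu)=\nu+\nu^2+\dots+\nu^{q/2}=1$, and $\varepsilon\in\mathrm{GF}(q^2)\setminus\mathrm{GF}(q)$ with $\varepsilon^2+\varepsilon+\nu=0$. Write each $t\in\mathrm{GF}(q^2)$ as $t=t_0+t_1\varepsilon$ with $t_0,t_1\in\mathrm{GF}(q)$ (so $a=a_0+a_1\varepsilon$, etc.). $\Xi_\infty$ is the quadric of $\mathrm{PG}(3,q)$ in coordinates $(x_0,x_1,y_0,y_1)$ with equation $(a_1+1)x_0^2+x_0x_1+[a_0+(1+\nu)a_1+\nu]x_1^2+(b_1+1)y_0^2+y_0y_1+[b_0+(1+\nu)b_1+\nu]y_1^2+c_1x_0y_0+(c_0+c_1)x_0y_1+(c_0+c_1)x_1y_0+[c_0+(1+\nu)c_1]x_1y_1=0.$ The rank of a quadric is the minimum number of indeterminates appearing in an equation for it under projective changes of coordinates. *)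

theory Defs
  imports "HOL-Analysis.Analysis"
begin

text \<open>GF(q^2) is modelled as a finite field type 'b with q^2 elements; GF(q) is its
  unique subfield of order q, namely the set of fixed points of the Frobenius t |-> t^q.\<close>
definition GFq :: "nat \<Rightarrow> 'b::field set" where
  "GFq q = {t. t ^ q = t}"

definition abs_trace :: "nat \<Rightarrow> 'b::field \<Rightarrow> 'b" where
  "abs_trace h nu = (\<Sum>i<h. nu ^ (2 ^ i))"

text \<open>Homogeneous coordinates (J,X,Y,Z) = (v$1,v$2,v$3,v$4); Sigma_infinity is J = 0.
  Homogenised equation of Q: zJ = aX^2+bY^2+cXY+dXJ+eYJ+fJ^2.\<close>
definition Q_form :: "'b::field \<Rightarrow> 'b \<Rightarrow> 'b \<Rightarrow> 'b \<Rightarrow> 'b \<Rightarrow> 'b \<Rightarrow> 'b^4 \<Rightarrow> 'b" where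
  "Q_form a b c d e f v =
     a * (v$2)^2 + b * (v$3)^2 + c * v$2 * v$3 + d * v$2 * v$1 + e * v$3 * v$1
     + f * (v$1)^2 - v$4 * v$1"

definition H_form :: "nat \<Rightarrow> 'b::field^4 \<Rightarrow> 'b" where
  "H_form q v = (v$4)^q * v$1 + v$4 * (v$1)^q - (v$2)^(q+1) - (v$3)^(q+1)"

definition hyperbolic_quadric :: "('b::field^4 \<Rightarrow> 'b) \<Rightarrow> bool" where
  "hyperbolic_quadric F \<longleftrightarrow>
     (\<exists>M::'b^4^4. invertible M \<and>
        (\<exists>lam. lam \<noteq> 0 \<and> (\<forall>w. F (M *v w) = lam * (w$1 * w$2 + w$3 * w$4))))"

text \<open>The quadric Xi_infinity of PG(3,q), coordinates (x0,x1,y0,y1) = (v$1,v$2,v$3,v$4).\<close>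
definition Xi_form :: "'b::field \<Rightarrow> 'b \<Rightarrow> 'b \<Rightarrow> 'b \<Rightarrow> 'b \<Rightarrow> 'b \<Rightarrow> 'b \<Rightarrow> 'b^4 \<Rightarrow> 'b" where
  "Xi_form a0 a1 b0 b1 c0 c1 nu v =
     (a1 + 1) * (v$1)^2 + v$1 * v$2 + (a0 + (1 + nu) * a1 + nu) * (v$2)^2
   + (b1 + 1) * (v$3)^2 + v$3 * v$4 + (b0 + (1 + nu) * b1 + nu) * (v$4)^2
   + c1 * v$1 * v$3 + (c0 + c1) * v$1 * v$4 + (c0 + c1) * v$2 * v$3
   + (c0 + (1 + nu) * c1) * v$2 * v$4"

definition depends_on :: "('b^4 \<Rightarrow> 'b) \<Rightarrow> 4 \<Rightarrow> bool" where
  "depends_on G i \<longleftrightarrow> (\<exists>w t. G (\<chi> j. if j = i then t else w$j) \<noteq> G w)"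

definition quadric_rank :: "'b::field set \<Rightarrow> ('b^4 \<Rightarrow> 'b) \<Rightarrow> nat" where
  "quadric_rank K F = (LEAST k. \<exists>M::'b^4^4. invertible M \<and> (\<forall>i j. M$i$j \<in> K) \<and>
       card {i. depends_on (\<lambda>w. F (M *v w)) i} = k)"

definition lin_form :: "'b::field^4 \<Rightarrow> 'b^4 \<Rightarrow> 'b" where
  "lin_form alpha v = (\<Sum>i\<in>UNIV. alpha$i * v$i)"

definition conjugate_planes :: "nat \<Rightarrow> 'b::field set \<Rightarrow> ('b^4 \<Rightarrow> 'b) \<Rightarrow> bool" where
  "conjugate_planes q K F \<longleftrightarrow>
     (\<exists>alpha::'b^4. \<not> (\<exists>mu. mu \<noteq> 0 \<and> (\<forall>i. mu * alpha$i \<in> K)) \<and>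
        (\<exists>kappa. kappa \<noteq> 0 \<and>
           (\<forall>v. F v = kappa * lin_form alpha v * lin_form (\<chi> i. (alpha$i)^q) v)))"

definition points_form_line :: "'b::field set \<Rightarrow> ('b^4 \<Rightarrow> 'b) \<Rightarrow> bool" where
  "points_form_line K F \<longleftrightarrow>
     (\<exists>u w::'b^4. (\<forall>i. u$i \<in> K) \<and> (\<forall>i. w$i \<in> K) \<and>
        (\<forall>s t. s \<in> K \<longrightarrow> t \<in> K \<longrightarrow> (\<chi> i. s * u$i + t * w$i) = 0 \<longrightarrow> s = 0 \<and> t = 0) \<and>
        {v. (\<forall>i. v$i \<in> K) \<and> v \<noteq> 0 \<and> F v = 0} =
        {(\<chi> i. s * u$i + t * w$i) | s t. s \<in> K \<and> t \<in> K \<and> (s \<noteq> 0 \<or> t \<noteq> 0)})"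

end

theory Submission
  imports Defs "HOL-Number_Theory.Residues"
begin

text \<open>Identify \<open>GF(q)\<^sup>4\<close> with \<open>GF(q\<^sup>2)\<^sup>2\<close> via \<open>(x\<^sub>0, x\<^sub>1, y\<^sub>0, y\<^sub>1) \<mapsto> (x\<^sub>0 + x\<^sub>1\<epsilon>, y\<^sub>0 + y\<^sub>1\<epsilon>)\<close>.
  In these coordinates \<open>\<Xi>\<^sub>\<infinity>\<close> is \<open>Tr(a x\<^sup>2 + b y\<^sup>2 + c x y) + x\<^sup>q\<^sup>+\<^sup>1 + y\<^sup>q\<^sup>+\<^sup>1\<close>. If \<open>\<Xi>\<^sub>\<infinity>\<close>
  contained a plane of \<open>PG(3,q)\<close>, that plane would contain a point \<open>(x, y)\<close> together with
  its multiples by \<open>\<epsilon>\<close> and \<open>1 + \<epsilon>\<close>; evaluating at these three points gives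
  \<open>a x\<^sup>2 + b y\<^sup>2 + c x y = 0 = x\<^sup>q\<^sup>+\<^sup>1 + y\<^sup>q\<^sup>+\<^sup>1\<close>, a point of \<open>\<Q> \<inter> \<H> \<inter> \<Sigma>\<^sub>\<infinity>\<close> other than \<open>P\<^sub>\<infinity>\<close>.

  A quadric of rank two is a binary form \<open>g(L\<^sub>1, L\<^sub>2)\<close> in two independent linear forms over
  \<open>GF(q)\<close>, and a nontrivial zero of \<open>g\<close> over \<open>GF(q)\<close> would yield a plane inside \<open>\<Xi>\<^sub>\<infinity>\<close>.
  So \<open>g = \<alpha> s\<^sup>2 + \<beta> s t + \<gamma> t\<^sup>2\<close> is anisotropic; in characteristic two this means
  \<open>\<beta> \<noteq> 0\<close> and \<open>Tr(\<alpha>\<gamma>/\<beta>\<^sup>2) = 1\<close>, and then \<open>g\<close> splits over \<open>GF(q\<^sup>2)\<close> into two linear factors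
  exchanged by the Frobenius map. These are the two conjugate planes; their only points over
  \<open>GF(q)\<close> are those with \<open>L\<^sub>1 = L\<^sub>2 = 0\<close>, a line.\<close>

section \<open>Characteristic two\<close>

lemma CHAR_eq_2_if_card_power_of_2:
  assumes "CARD('a::{field,finite}) = 2 ^ n"
  shows "CHAR('a) = 2"
proof -
  have prime: "prime CHAR('a)"
    by (simp add: finite_imp_CHAR_pos prime_CHAR_semidom)
  moreover have "CHAR('a) dvd 2 ^ n"
    using CHAR_dvd_CARD[where 'a='a] assms by simp
  ultimately have "CHAR('a) dvd 2"
    using prime_dvd_power by blast
  with prime show ?thesis
    by (simp add: primes_dvd_imp_eq)
qed

lemma two_eq_zero_if_CHAR_2: "CHAR('a::comm_ring_1) = 2 \<Longrightarrow> (2::'a) = 0"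
  by (metis of_nat_CHAR of_nat_numeral)

lemma power_two_power_add:
  "CHAR('a::comm_ring_1) = 2 \<Longrightarrow> (x + y :: 'a) ^ 2 ^ k = x ^ 2 ^ k + y ^ 2 ^ k"
  using freshmans_dream' two_is_prime_nat by metis

lemma power_two_power_sum:
  "CHAR('a::comm_ring_1) = 2 \<Longrightarrow> (sum f A :: 'a) ^ 2 ^ k = (\<Sum>i\<in>A. f i ^ 2 ^ k)"
  using freshmans_dream_sum' two_is_prime_nat by metis

lemma square_sum_CHAR_2:
  "CHAR('a::comm_ring_1) = 2 \<Longrightarrow> (sum f A :: 'a)\<^sup>2 = (\<Sum>i\<in>A. (f i)\<^sup>2)"
  using power_two_power_sum[of f A 1] by simp

lemma power2_power_commute: "(z\<^sup>2) ^ n = (z ^ n :: 'a::monoid_mult)\<^sup>2"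
  by (metis mult.commute power_mult)

lemma power_two_power_square: "(x ^ 2 ^ k)\<^sup>2 = (x :: 'a::monoid_mult) ^ 2 ^ Suc k"
  by (metis power_Suc2 power_mult)

section \<open>The subfield \<open>GF(q)\<close>\<close>

lemma GFq_zero [simp]: "0 < q \<Longrightarrow> 0 \<in> GFq q"
  by (simp add: GFq_def)

lemma GFq_one [simp]: "1 \<in> GFq q"
  by (simp add: GFq_def)

lemma GFq_mult: "x \<in> GFq q \<Longrightarrow> y \<in> GFq q \<Longrightarrow> x * y \<in> GFq q"
  by (simp add: GFq_def power_mult_distrib)

lemma GFq_divide:
  assumes "x \<in> GFq q" and "y \<in> GFq q"
  shows "x / y \<in> GFq q"
proof -
  have "(x / y) ^ q = x ^ q / y ^ q"
    by (rule power_divide)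
  with assms show ?thesis
    by (simp add: GFq_def)
qed

lemma GFq_power:
  assumes "x \<in> GFq q"
  shows "x ^ n \<in> GFq q"
proof -
  have "(x ^ n) ^ q = (x ^ q) ^ n"
    by (simp add: mult.commute flip: power_mult)
  with assms show ?thesis
    by (simp add: GFq_def)
qed

context
  fixes x y :: "'a::field"
  assumes char: "CHAR('a) = 2"
begin

lemma GFq_add: "x \<in> GFq (2^h) \<Longrightarrow> y \<in> GFq (2^h) \<Longrightarrow> x + y \<in> GFq (2^h)"
  by (simp add: GFq_def power_two_power_add[OF char])

lemma GFq_uminus: "x \<in> GFq (2^h) \<Longrightarrow> - x \<in> GFq (2^h)"
  by (simp add: uminus_CHAR_2[OF char])

lemma GFq_diff: "x \<in> GFq (2^h) \<Longrightarrow> y \<in> GFq (2^h) \<Longrightarrow> x - y \<in> GFq (2^h)"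
  by (simp add: minus_CHAR_2[OF char] GFq_add)

end

lemma GFq_sum:
  fixes f :: "'b \<Rightarrow> 'a::field"
  assumes "CHAR('a) = 2" and "\<And>i. i \<in> A \<Longrightarrow> f i \<in> GFq (2^h)"
  shows "sum f A \<in> GFq (2^h)"
proof -
  have "sum f A ^ 2 ^ h = (\<Sum>i\<in>A. f i ^ 2 ^ h)"
    using assms(1) by (rule power_two_power_sum)
  also have "\<dots> = sum f A"
    using assms(2) by (intro sum.cong) (auto simp: GFq_def)
  finally show ?thesis by (simp add: GFq_def)
qed

section \<open>The absolute trace\<close>

lemma sum_lessThan_Suc_shift_eq:
  fixes f :: "nat \<Rightarrow> 'a::comm_monoid_add"
  shows "(\<Sum>k<n. f (Suc k)) + f 0 = (\<Sum>k<n. f k) + f n"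
  by (metis add.commute sum.lessThan_Suc sum.lessThan_Suc_shift)

lemma abs_trace_frobenius:
  assumes "x \<in> GFq (2^h)"
  shows "(\<Sum>k<h. x ^ 2 ^ Suc k) = abs_trace h x"
  using sum_lessThan_Suc_shift_eq[of "\<lambda>k. x ^ 2 ^ k" h] assms
  by (simp add: abs_trace_def GFq_def)

lemma abs_trace_0_or_1:
  fixes x :: "'a::field"
  assumes char: "CHAR('a) = 2" and x: "x \<in> GFq (2^h)"
  shows "abs_trace h x = 0 \<or> abs_trace h x = 1"
proof -
  have "abs_trace h x ^ 2 = (\<Sum>k<h. x ^ 2 ^ Suc k)"
    unfolding abs_trace_def square_sum_CHAR_2[OF char] power_two_power_square ..
  also have "\<dots> = abs_trace h x"
    using x by (rule abs_trace_frobenius)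
  finally have "abs_trace h x * abs_trace h x = 1 * abs_trace h x"
    by (simp only: power2_eq_square mult_1)
  then show ?thesis
    by (metis mult_cancel_right)
qed

text \<open>For \<open>Tr \<theta> = 1\<close> and \<open>Tr x = 0\<close> this is the classical solution of \<open>\<mu>\<^sup>2 + \<mu> = x\<close>.\<close>
lemma artin_schreier_sum:
  fixes \<theta> x :: "'a::field"
  assumes char: "CHAR('a) = 2" and x: "x \<in> GFq (2^h)"
  defines "\<mu> \<equiv> \<Sum>k<h. (\<Sum>i<k. \<theta> ^ 2 ^ i) * x ^ 2 ^ k"
  shows "\<mu>\<^sup>2 = \<mu> + abs_trace h \<theta> * x + \<theta> * abs_trace h x"
proof -
  define S where "S k = (\<Sum>i<k. \<theta> ^ 2 ^ i)" for k
  have \<mu>_S: "\<mu> = (\<Sum>k<h. S k * x ^ 2 ^ k)"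
    by (simp add: \<mu>_def S_def)
  have S_square: "(S k)\<^sup>2 = S (Suc k) + \<theta>" for k
  proof -
    have "(S k)\<^sup>2 = (\<Sum>i<k. \<theta> ^ 2 ^ Suc i)"
      unfolding S_def square_sum_CHAR_2[OF char] power_two_power_square ..
    moreover have "(\<Sum>i<k. \<theta> ^ 2 ^ Suc i) + \<theta> = S (Suc k)"
      using sum_lessThan_Suc_shift_eq[of "\<lambda>i. \<theta> ^ 2 ^ i" k] by (simp add: S_def)
    ultimately show ?thesis
      by (metis char add_diff_cancel_right' minus_CHAR_2)
  qed
  have "\<mu>\<^sup>2 = (\<Sum>k<h. (S k)\<^sup>2 * x ^ 2 ^ Suc k)"
    by (simp only: \<mu>_S square_sum_CHAR_2[OF char] power_mult_distrib power_two_power_square)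
  also have "\<dots> = (\<Sum>k<h. S (Suc k) * x ^ 2 ^ Suc k) + \<theta> * (\<Sum>k<h. x ^ 2 ^ Suc k)"
    by (simp only: S_square distrib_right sum.distrib sum_distrib_left)
  also have "(\<Sum>k<h. S (Suc k) * x ^ 2 ^ Suc k) = \<mu> + S h * x ^ 2 ^ h"
    using sum_lessThan_Suc_shift_eq[of "\<lambda>k. S k * x ^ 2 ^ k" h] by (simp add: \<mu>_S S_def)
  also have "S h = abs_trace h \<theta>"
    by (simp add: S_def abs_trace_def)
  also have "x ^ 2 ^ h = x"
    using x by (simp add: GFq_def)
  also have "(\<Sum>k<h. x ^ 2 ^ Suc k) = abs_trace h x"
    using x by (rule abs_trace_frobenius)
  finally show ?thesis
    by (simp only: add.assoc)
qed

section \<open>Binary quadratic forms\<close>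

definition binary_form :: "'a::comm_ring_1 \<Rightarrow> 'a \<Rightarrow> 'a \<Rightarrow> 'a \<Rightarrow> 'a \<Rightarrow> 'a" where
  "binary_form \<alpha> \<beta> \<gamma> s t = \<alpha> * s\<^sup>2 + \<beta> * s * t + \<gamma> * t\<^sup>2"

definition anisotropic_over :: "'a::comm_ring_1 set \<Rightarrow> 'a \<Rightarrow> 'a \<Rightarrow> 'a \<Rightarrow> bool" where
  "anisotropic_over K \<alpha> \<beta> \<gamma> \<longleftrightarrow>
     (\<forall>s\<in>K. \<forall>t\<in>K. binary_form \<alpha> \<beta> \<gamma> s t = 0 \<longrightarrow> s = 0 \<and> t = 0)"

lemma binary_form_zero_proportional:
  fixes \<alpha> :: "'a::field"
  assumes zero: "binary_form \<alpha> \<beta> \<gamma> s t = 0" and nontrivial: "s \<noteq> 0 \<or> t \<noteq> 0"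
    and proportional: "t * p = s * r"
  shows "binary_form \<alpha> \<beta> \<gamma> p r = 0"
proof (cases "s = 0")
  case False
  have "s\<^sup>2 * binary_form \<alpha> \<beta> \<gamma> p r
      = p\<^sup>2 * binary_form \<alpha> \<beta> \<gamma> s t + (s * r - t * p) * (\<beta> * p * s + \<gamma> * (s * r + t * p))"
    by (simp add: binary_form_def algebra_simps power2_eq_square)
  with False zero proportional show ?thesis by simp
next
  case True
  with nontrivial have "t \<noteq> 0" by simp
  have "t\<^sup>2 * binary_form \<alpha> \<beta> \<gamma> p r
      = r\<^sup>2 * binary_form \<alpha> \<beta> \<gamma> s t + (t * p - s * r) * (\<beta> * r * t + \<alpha> * (t * p + s * r))"
    by (simp add: binary_form_def algebra_simps power2_eq_square)
  with \<open>t \<noteq> 0\<close> zero proportional show ?thesis by simp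
qed

lemma binary_form_power_two_power:
  assumes char: "CHAR('a::comm_ring_1) = 2"
  shows "binary_form \<alpha> \<beta> \<gamma> s t ^ 2 ^ k
    = binary_form (\<alpha> ^ 2 ^ k) (\<beta> ^ 2 ^ k) (\<gamma> ^ 2 ^ k) (s ^ 2 ^ k) (t ^ 2 ^ k :: 'a)"
proof -
  show ?thesis
    by (simp only: binary_form_def power_two_power_add[OF char] power_mult_distrib power2_power_commute)
qed

lemma binary_form_scale:
  "binary_form \<alpha> \<beta> \<gamma> (c * s) (c * t) = c\<^sup>2 * binary_form \<alpha> \<beta> \<gamma> s t"
  by (simp add: binary_form_def algebra_simps power2_eq_square)

lemma anisotropic_binary_form_coeffs_nonzero:
  fixes \<alpha> \<beta> \<gamma> :: "'a::field"
  assumes char: "CHAR('a) = 2" and h: "0 < h"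
    and \<alpha>: "\<alpha> \<in> GFq (2^h)" and \<gamma>: "\<gamma> \<in> GFq (2^h)"
    and aniso: "anisotropic_over (GFq (2^h)) \<alpha> \<beta> \<gamma>"
  shows "\<alpha> \<noteq> 0" and "\<beta> \<noteq> 0"
proof -
  have K01: "0 \<in> GFq (2^h)" "1 \<in> GFq (2^h)"
    by simp_all
  show "\<alpha> \<noteq> 0"
  proof
    assume "\<alpha> = 0"
    then have "binary_form \<alpha> \<beta> \<gamma> 1 0 = 0"
      by (simp add: binary_form_def)
    with aniso K01 have "(1::'a) = 0"
      unfolding anisotropic_over_def by blast
    then show False by simp
  qed
  show "\<beta> \<noteq> 0"
  proof
    assume "\<beta> = 0"
    \<comment> \<open>every element of \<open>GF(2^h)\<close> is a square, so \<open>\<alpha> s\<^sup>2 + \<gamma> t\<^sup>2\<close> has the zero \<open>(\<surd>\<gamma>, \<surd>\<alpha>)\<close>\<close>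
    have "Suc (h - 1) = h"
      using h by simp
    then have sqrt: "(z ^ 2 ^ (h - 1))\<^sup>2 = z" if "z \<in> GFq (2^h)" for z :: 'a
      using that unfolding power_two_power_square by (simp add: GFq_def)
    define s t where "s = \<gamma> ^ 2 ^ (h - 1)" and "t = \<alpha> ^ 2 ^ (h - 1)"
    have s2: "s\<^sup>2 = \<gamma>" and t2: "t\<^sup>2 = \<alpha>"
      unfolding s_def t_def using sqrt \<alpha> \<gamma> by blast+
    have "binary_form \<alpha> \<beta> \<gamma> s t = 2 * (\<alpha> * \<gamma>)"
      by (simp add: binary_form_def \<open>\<beta> = 0\<close> s2 t2 mult_2 mult.commute)
    then have "binary_form \<alpha> \<beta> \<gamma> s t = 0"
      by (simp add: two_eq_zero_if_CHAR_2[OF char])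
    moreover have "s \<in> GFq (2^h)" "t \<in> GFq (2^h)"
      using \<alpha> \<gamma> by (simp_all add: s_def t_def GFq_power)
    ultimately have "t = 0"
      using aniso by (simp add: anisotropic_over_def)
    with t2 \<open>\<alpha> \<noteq> 0\<close> show False
      by simp
  qed
qed

lemma anisotropic_binary_form_trace:
  fixes \<alpha> \<beta> \<gamma> \<nu> :: "'a::field"
  assumes char: "CHAR('a) = 2" and h: "0 < h"
    and \<nu>: "\<nu> \<in> GFq (2^h)" and trace_\<nu>: "abs_trace h \<nu> = 1"
    and \<alpha>: "\<alpha> \<in> GFq (2^h)" and \<beta>: "\<beta> \<in> GFq (2^h)" and \<gamma>: "\<gamma> \<in> GFq (2^h)"
    and aniso: "anisotropic_over (GFq (2^h)) \<alpha> \<beta> \<gamma>"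
  shows "abs_trace h (\<alpha> * \<gamma> / \<beta>\<^sup>2) = 1"
proof (rule ccontr)
  define \<delta> where "\<delta> = \<alpha> * \<gamma> / \<beta>\<^sup>2"
  define \<mu> where "\<mu> = (\<Sum>k<h. (\<Sum>i<k. \<nu> ^ 2 ^ i) * \<delta> ^ 2 ^ k)"
  have \<alpha>0: "\<alpha> \<noteq> 0" and \<beta>0: "\<beta> \<noteq> 0"
    using anisotropic_binary_form_coeffs_nonzero[OF char h \<alpha> \<gamma> aniso] by simp_all
  have \<delta>_GFq: "\<delta> \<in> GFq (2^h)"
    using \<alpha> \<beta> \<gamma> by (simp add: \<delta>_def GFq_mult GFq_divide GFq_power)
  assume "abs_trace h (\<alpha> * \<gamma> / \<beta>\<^sup>2) \<noteq> 1"
  then have "abs_trace h \<delta> = 0"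
    using abs_trace_0_or_1[OF char \<delta>_GFq] by (auto simp: \<delta>_def)
  then have \<mu>_square: "\<mu>\<^sup>2 = \<mu> + \<delta>"
    using artin_schreier_sum[OF char \<delta>_GFq, of \<nu>] trace_\<nu> by (simp add: \<mu>_def)
  have \<mu>_GFq: "\<mu> \<in> GFq (2^h)"
    unfolding \<mu>_def using \<nu> \<delta>_GFq by (intro GFq_sum[OF char] GFq_mult GFq_power)
  have "binary_form \<alpha> \<beta> \<gamma> (\<beta> * \<mu> / \<alpha>) 1 = \<beta>\<^sup>2 / \<alpha> * (\<mu>\<^sup>2 + \<mu> + \<delta>)"
    using \<alpha>0 \<beta>0 by (simp add: binary_form_def \<delta>_def field_simps power2_eq_square)
  also have "\<mu>\<^sup>2 + \<mu> + \<delta> = 2 * (\<mu> + \<delta>)"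
    by (simp add: \<mu>_square mult_2 algebra_simps)
  finally have "binary_form \<alpha> \<beta> \<gamma> (\<beta> * \<mu> / \<alpha>) 1 = 0"
    by (simp add: two_eq_zero_if_CHAR_2[OF char])
  moreover have "\<beta> * \<mu> / \<alpha> \<in> GFq (2^h)"
    using \<alpha> \<beta> \<mu>_GFq by (simp add: GFq_mult GFq_divide)
  ultimately show False
    using aniso unfolding anisotropic_over_def by (metis GFq_one one_neq_zero)
qed

section \<open>Linear algebra over \<open>GF(q)\<close>\<close>

lemma lin_form_diff: "lin_form L (u - v) = lin_form L u - lin_form L (v :: 'a::field^4)"
  by (simp add: lin_form_def algebra_simps sum_subtractf)

lemma lin_form_add: "lin_form L (u + v) = lin_form L u + lin_form L (v :: 'a::field^4)"
  by (simp add: lin_form_def algebra_simps sum.distrib)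

lemma lin_form_GFq:
  fixes L v :: "'a::field^4"
  assumes "CHAR('a) = 2" and "\<And>k. L$k \<in> GFq (2^h)" and "\<And>k. v$k \<in> GFq (2^h)"
  shows "lin_form L v \<in> GFq (2^h)"
  unfolding lin_form_def using assms by (intro GFq_sum GFq_mult) auto

lemma card_vectors_with_entries_in:
  assumes "finite K"
  shows "card {v :: 'a^'n. \<forall>k. v$k \<in> K} = card K ^ CARD('n)"
proof -
  have "bij_betw vec_nth {v :: 'a^'n. \<forall>k. v$k \<in> K} (Pi\<^sub>E UNIV (\<lambda>_. K))"
  proof (rule bij_betwI')
    show "vec_nth u = vec_nth v \<longleftrightarrow> u = v" for u v :: "'a^'n"
      by (simp add: vec_nth_inject)
    show "vec_nth v \<in> Pi\<^sub>E UNIV (\<lambda>_. K)" if "v \<in> {v. \<forall>k. v$k \<in> K}" for v :: "'a^'n"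
      using that by (simp add: PiE_UNIV_domain)
    show "\<exists>v\<in>{v :: 'a^'n. \<forall>k. v$k \<in> K}. f = vec_nth v" if "f \<in> Pi\<^sub>E UNIV (\<lambda>_. K)" for f
      using that by (intro bexI[of _ "vec_lambda f"]) (auto simp: PiE_UNIV_domain)
  qed
  then have "card {v :: 'a^'n. \<forall>k. v$k \<in> K} = card (Pi\<^sub>E (UNIV :: 'n set) (\<lambda>_. K))"
    by (rule bij_betw_same_card)
  also have "\<dots> = card K ^ CARD('n)"
    by (simp add: card_PiE)
  finally show ?thesis .
qed

text \<open>Two linear equations over \<open>GF(q)\<close> in four unknowns have a nonzero common solution:
  \<open>q\<^sup>4\<close> vectors are mapped into \<open>q\<^sup>2\<close> values, so two of them share their values.\<close>
lemma two_lin_forms_common_zero: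
  fixes L L' :: "'a::field^4"
  assumes finite: "finite (UNIV :: 'a set)" and char: "CHAR('a) = 2"
    and L: "\<And>k. L$k \<in> GFq (2^h)" and L': "\<And>k. L'$k \<in> GFq (2^h)"
  obtains u where "\<And>k. u$k \<in> GFq (2^h)" "u \<noteq> 0" "lin_form L u = 0" "lin_form L' u = 0"
proof -
  let ?K = "GFq (2^h) :: 'a set"
  let ?V = "{v :: 'a^4. \<forall>k. v$k \<in> ?K}"
  let ?f = "\<lambda>v. (lin_form L v, lin_form L' v)"
  have "finite ?K"
    using finite by (rule finite_subset[rotated]) simp
  then have "card {0, 1 :: 'a} \<le> card ?K"
    by (rule card_mono) simp
  then have "1 < card ?K"
    by simp
  then have "card ?K ^ 2 < card ?K ^ 4"
    using power_strict_increasing[of 2 4 "card ?K"] by simp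
  then have "card (?K \<times> ?K) < card ?V"
    using \<open>finite ?K\<close> by (simp add: card_vectors_with_entries_in card_cartesian_product power2_eq_square)
  moreover have "?f ` ?V \<subseteq> ?K \<times> ?K"
    using L L' by (auto intro: lin_form_GFq[OF char])
  ultimately have "\<not> inj_on ?f ?V"
    using card_inj_on_le[of ?f ?V "?K \<times> ?K"] \<open>finite ?K\<close> by fastforce
  then obtain u v where "u \<in> ?V" "v \<in> ?V" "u \<noteq> v" "?f u = ?f v"
    unfolding inj_on_def by blast
  then show thesis
    by (intro that[of "u - v"]) (simp_all add: GFq_diff[OF char] lin_form_diff)
qed

lemma matrix_inverse_GFq:
  fixes M N :: "'a::field^'n^'n"
  assumes char: "CHAR('a) = 2" and M: "\<And>i j. M$i$j \<in> GFq (2^h)"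
    and MN: "M ** N = mat 1" and NM: "N ** M = mat 1"
  shows "N$i$j \<in> GFq (2^h)"
proof -
  define N' :: "'a^'n^'n" where "N' = (\<chi> i j. (N$i$j) ^ 2 ^ h)"
  have M_fixed: "(M$l$k) ^ 2 ^ h = M$l$k" for l k
    using M by (simp add: GFq_def)
  have "(N' ** M)$i$k = ((N ** M)$i$k) ^ 2 ^ h" for i k
  proof -
    have "(N' ** M)$i$k = (\<Sum>l\<in>UNIV. (N$i$l * M$l$k) ^ 2 ^ h)"
      by (simp add: matrix_matrix_mult_def N'_def power_mult_distrib M_fixed)
    also have "\<dots> = ((N ** M)$i$k) ^ 2 ^ h"
      by (simp add: matrix_matrix_mult_def power_two_power_sum[OF char])
    finally show ?thesis .
  qed
  then have "N' ** M = mat 1"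
    using NM by (simp add: vec_eq_iff mat_def zero_power)
  then have "N' = N"
    by (metis MN matrix_mul_assoc matrix_mul_lid matrix_mul_rid)
  then have "(N$i$j) ^ 2 ^ h = N$i$j"
    by (metis N'_def vec_lambda_beta)
  then show ?thesis
    by (simp add: GFq_def)
qed

section \<open>Quadrics of rank two\<close>

lemma quadric_rank_attained:
  fixes F :: "'a::field^4 \<Rightarrow> 'a"
  assumes "0 \<in> K" and "1 \<in> K"
  obtains M :: "'a^4^4" where "invertible M" "\<And>i j. M$i$j \<in> K"
    "card {i. depends_on (\<lambda>w. F (M *v w)) i} = quadric_rank K F"
proof -
  have "invertible (mat 1 :: 'a^4^4)"
    unfolding invertible_def by (intro exI[of _ "mat 1"]) simp
  then have "\<exists>k M :: 'a^4^4. invertible M \<and> (\<forall>i j. M$i$j \<in> K) \<and>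
      card {i. depends_on (\<lambda>w. F (M *v w)) i} = k"
    using assms by (intro exI[of _ "mat 1"] exI) (simp add: mat_def)
  from LeastI_ex[OF this] obtain M :: "'a^4^4" where "invertible M" "\<forall>i j. M$i$j \<in> K"
    "card {i. depends_on (\<lambda>w. F (M *v w)) i} = quadric_rank K F"
    unfolding quadric_rank_def by blast
  then show thesis
    using that by blast
qed

lemma eq_on_dependent_coordinates:
  fixes G :: "'a::zero^4 \<Rightarrow> 'a"
  assumes "{k. depends_on G k} \<subseteq> S"
  shows "G w = G (\<chi> l. if l \<in> S then w$l else 0)"
proof -
  have restrict: "G w = G (\<chi> l. if l \<in> A - S then 0 else w$l)" if "finite A" for A
    using that
  proof (induction A rule: finite_induct)
    case empty
    show ?case by simp
  next
    case (insert k A)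
    let ?w = "\<chi> l. if l \<in> A - S then 0 else w$l"
    show ?case
    proof (cases "k \<in> S")
      case True
      then have "(\<chi> l. if l \<in> insert k A - S then 0 else w$l) = ?w"
        by (auto simp: vec_eq_iff)
      with insert.IH show ?thesis by simp
    next
      case False
      with assms have "G (\<chi> j. if j = k then 0 else ?w$j) = G ?w"
        unfolding depends_on_def by blast
      moreover have "(\<chi> j. if j = k then 0 else ?w$j) = (\<chi> l. if l \<in> insert k A - S then 0 else w$l)"
        using False by (auto simp: vec_eq_iff)
      ultimately show ?thesis
        using insert.IH by simp
    qed
  qed
  have "G w = G (\<chi> l. if l \<in> UNIV - S then 0 else w$l)"
    by (rule restrict) simp
  also have "(\<chi> l. if l \<in> UNIV - S then 0 else w$l) = (\<chi> l. if l \<in> S then w$l else 0)"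
    by (simp add: vec_eq_iff)
  finally show ?thesis .
qed

lemma matrix_vector_mult_axis: "(A :: 'a::semiring_1^'n^'m) *v axis k 1 = (\<chi> r. A$r$k)"
  by (simp add: vec_eq_iff matrix_vector_mult_def axis_def if_distrib cong: if_cong)

lemma matrix_vector_mult_GFq:
  fixes N :: "'a::field^'n^'m"
  assumes "CHAR('a) = 2" and "\<And>r s. N$r$s \<in> GFq (2^h)" and "\<And>k. v$k \<in> GFq (2^h)"
  shows "(N *v v)$r \<in> GFq (2^h)"
  unfolding matrix_vector_mult_def using assms by (simp add: GFq_sum GFq_mult)

lemma rank_two_normal_form:
  fixes F :: "'a::field^4 \<Rightarrow> 'a"
  assumes char: "CHAR('a) = 2" and rank: "quadric_rank (GFq (2^h)) F = 2"
    and F_GFq: "\<And>v. (\<And>k. v$k \<in> GFq (2^h)) \<Longrightarrow> F v \<in> GFq (2^h)"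
    and F_quadratic: "\<And>s t U V. F (s *s U + t *s V)
          = s\<^sup>2 * F U + s * t * (F (U + V) - F U - F V) + t\<^sup>2 * F V"
  obtains M N :: "'a^4^4" and i j :: 4 and \<alpha> \<beta> \<gamma> :: 'a
  where "M ** N = mat 1" "N ** M = mat 1" "\<And>r s. M$r$s \<in> GFq (2^h)" "\<And>r s. N$r$s \<in> GFq (2^h)"
    "i \<noteq> j" "\<alpha> \<in> GFq (2^h)" "\<beta> \<in> GFq (2^h)" "\<gamma> \<in> GFq (2^h)"
    "\<And>v. F v = binary_form \<alpha> \<beta> \<gamma> ((N *v v)$i) ((N *v v)$j)"
proof -
  let ?K = "GFq (2^h) :: 'a set"
  obtain M :: "'a^4^4" where "invertible M" and M: "\<And>r s. M$r$s \<in> ?K"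
    and card: "card {k. depends_on (\<lambda>w. F (M *v w)) k} = 2"
    using quadric_rank_attained[of ?K F] rank by auto
  obtain N where MN: "M ** N = mat 1" and NM: "N ** M = mat 1"
    using \<open>invertible M\<close> by (auto simp: invertible_def)
  obtain i j where "i \<noteq> j" and deps: "{k. depends_on (\<lambda>w. F (M *v w)) k} = {i, j}"
    using card by (auto simp: card_2_iff)
  define U V where "U = M *v axis i 1" and "V = M *v axis j 1"
  have U: "U$k \<in> ?K" and V: "V$k \<in> ?K" for k
    using M by (simp_all add: U_def V_def matrix_vector_mult_axis)
  define \<alpha> \<beta> \<gamma> where "\<alpha> = F U" and "\<beta> = F (U + V) - F U - F V" and "\<gamma> = F V"
  have FM: "F (M *v w) = binary_form \<alpha> \<beta> \<gamma> (w$i) (w$j)" for w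
  proof -
    have "F (M *v w) = F (M *v (\<chi> l. if l \<in> {i, j} then w$l else 0))"
      using eq_on_dependent_coordinates[of "\<lambda>w. F (M *v w)" "{i, j}"] deps by simp
    also have "(\<chi> l. if l \<in> {i, j} then w$l else 0) = w$i *s axis i 1 + w$j *s axis j 1"
      using \<open>i \<noteq> j\<close> by (auto simp: vec_eq_iff axis_def)
    also have "M *v (w$i *s axis i 1 + w$j *s axis j 1) = w$i *s U + w$j *s V"
      by (simp add: U_def V_def matrix_vector_right_distrib vector_scalar_commute)
    finally show ?thesis
      unfolding F_quadratic by (simp add: binary_form_def \<alpha>_def \<beta>_def \<gamma>_def ac_simps)
  qed
  show thesis
  proof (rule that[OF MN NM M matrix_inverse_GFq[OF char M MN NM] \<open>i \<noteq> j\<close>])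
    show "\<alpha> \<in> ?K" "\<beta> \<in> ?K" "\<gamma> \<in> ?K"
      using U V by (simp_all add: \<alpha>_def \<beta>_def \<gamma>_def F_GFq GFq_add[OF char] GFq_diff[OF char])
    show "F v = binary_form \<alpha> \<beta> \<gamma> ((N *v v)$i) ((N *v v)$j)" for v
      using FM[of "N *v v"] by (simp add: matrix_vector_mul_assoc MN)
  qed
qed

definition zeros_contain_no_plane :: "'a::field set \<Rightarrow> ('a^4 \<Rightarrow> 'a) \<Rightarrow> bool" where
  "zeros_contain_no_plane K F \<longleftrightarrow>
     (\<forall>L. (\<forall>k. L$k \<in> K) \<longrightarrow> (\<exists>v. (\<forall>k. v$k \<in> K) \<and> lin_form L v = 0 \<and> F v \<noteq> 0))"

lemma anisotropic_if_zeros_contain_no_plane: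
  fixes N :: "'a::field^4^4"
  assumes char: "CHAR('a) = 2" and N: "\<And>r s. N$r$s \<in> GFq (2^h)"
    and F: "\<And>v. F v = binary_form \<alpha> \<beta> \<gamma> ((N *v v)$i) ((N *v v)$j)"
    and no_plane: "zeros_contain_no_plane (GFq (2^h)) F"
  shows "anisotropic_over (GFq (2^h)) \<alpha> \<beta> \<gamma>"
  unfolding anisotropic_over_def
proof (intro ballI impI)
  fix s t
  assume s: "s \<in> GFq (2^h)" and t: "t \<in> GFq (2^h)" and zero: "binary_form \<alpha> \<beta> \<gamma> s t = 0"
  show "s = 0 \<and> t = 0"
  proof (rule ccontr)
    assume nontrivial: "\<not> (s = 0 \<and> t = 0)"
    define L :: "'a^4" where "L = (\<chi> k. t * N$i$k - s * N$j$k)"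
    have "\<forall>k. L$k \<in> GFq (2^h)"
      using s t N by (simp add: L_def GFq_diff[OF char] GFq_mult)
    then obtain v where L_v: "lin_form L v = 0" and "F v \<noteq> 0"
      using no_plane by (auto simp: zeros_contain_no_plane_def)
    have "lin_form L v = t * (N *v v)$i - s * (N *v v)$j"
      by (simp add: lin_form_def L_def matrix_vector_mult_def sum_distrib_left sum_subtractf
          algebra_simps)
    with L_v have "t * (N *v v)$i = s * (N *v v)$j"
      by simp
    then have "F v = 0"
      using binary_form_zero_proportional[OF zero] nontrivial F by auto
    with \<open>F v \<noteq> 0\<close> show False ..
  qed
qed

lemma rows_independent_if_left_inverse:
  fixes N M :: "'a::field^'n^'n"
  assumes NM: "N ** M = mat 1" and "i \<noteq> j" and comb: "\<And>k. c * N$i$k + d * N$j$k = 0"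
  shows "c = 0" and "d = 0"
proof -
  have "c * (N ** M)$i$m + d * (N ** M)$j$m = (\<Sum>k\<in>UNIV. (c * N$i$k + d * N$j$k) * M$k$m)" for m
    by (simp add: matrix_matrix_mult_def sum_distrib_left sum.distrib algebra_simps)
  then have "c * (N ** M)$i$m + d * (N ** M)$j$m = 0" for m
    by (simp add: comb)
  from this[of i] this[of j] show "c = 0" "d = 0"
    using NM \<open>i \<noteq> j\<close> by (simp_all add: mat_def)
qed

lemma conjugate_planes_if_factors:
  fixes N M :: "'a::field^4^4"
  assumes char: "CHAR('a) = 2" and NM: "N ** M = mat 1" and N: "\<And>r s. N$r$s \<in> GFq (2^h)"
    and "i \<noteq> j" and "\<kappa> \<noteq> 0" and \<rho>: "\<rho> ^ 2 ^ h \<noteq> \<rho>"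
    and F: "\<And>v. F v = \<kappa> * ((N *v v)$i + \<rho> * (N *v v)$j) * ((N *v v)$i + \<rho> ^ 2 ^ h * (N *v v)$j)"
  shows "conjugate_planes (2^h) (GFq (2^h)) F"
proof -
  have N_fixed: "N$r$s ^ 2 ^ h = N$r$s" for r s
    using N by (simp add: GFq_def)
  define a :: "'a^4" where "a = (\<chi> k. N$i$k + \<rho> * N$j$k)"
  have a_conj: "(a$k) ^ 2 ^ h = N$i$k + \<rho> ^ 2 ^ h * N$j$k" for k
    by (simp add: a_def power_two_power_add[OF char] power_mult_distrib N_fixed)
  have lin_form_row: "lin_form (\<chi> k. N$i$k + c * N$j$k) v = (N *v v)$i + c * (N *v v)$j" for c v
    by (simp add: lin_form_def matrix_vector_mult_def sum.distrib sum_distrib_left algebra_simps)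
  show ?thesis
    unfolding conjugate_planes_def
  proof (intro exI conjI allI)
    show "\<kappa> \<noteq> 0" by fact
    show "F v = \<kappa> * lin_form a v * lin_form (\<chi> k. (a$k) ^ 2 ^ h) v" for v
      unfolding a_conj by (simp add: a_def lin_form_row F mult.assoc)
    show "\<not> (\<exists>\<mu>. \<mu> \<noteq> 0 \<and> (\<forall>k. \<mu> * a$k \<in> GFq (2^h)))"
    proof
      assume "\<exists>\<mu>. \<mu> \<noteq> 0 \<and> (\<forall>k. \<mu> * a$k \<in> GFq (2^h))"
      then obtain \<mu> where "\<mu> \<noteq> 0" and \<mu>a: "\<And>k. \<mu> * a$k \<in> GFq (2^h)"
        by blast
      \<comment> \<open>\<open>\<mu> a\<close> is fixed by the Frobenius map, which gives a dependence between rows \<open>i\<close>, \<open>j\<close> of \<open>N\<close>\<close>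
      have "(\<mu> ^ 2 ^ h - \<mu>) * N$i$k + (\<mu> ^ 2 ^ h * \<rho> ^ 2 ^ h - \<mu> * \<rho>) * N$j$k = 0" for k
      proof -
        have "\<mu> ^ 2 ^ h * (a$k) ^ 2 ^ h = \<mu> * a$k"
          using \<mu>a[of k] by (simp add: GFq_def power_mult_distrib)
        then have "\<mu> ^ 2 ^ h * (N$i$k + \<rho> ^ 2 ^ h * N$j$k) = \<mu> * (N$i$k + \<rho> * N$j$k)"
          unfolding a_conj by (simp add: a_def)
        then show ?thesis
          by (simp add: algebra_simps)
      qed
      then have "\<mu> ^ 2 ^ h - \<mu> = 0" and "\<mu> ^ 2 ^ h * \<rho> ^ 2 ^ h - \<mu> * \<rho> = 0"
        using rows_independent_if_left_inverse[OF NM \<open>i \<noteq> j\<close>] by blast+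
      with \<open>\<mu> \<noteq> 0\<close> \<rho> show False
        by simp
    qed
  qed
qed

lemma points_form_line_if_anisotropic:
  fixes M N :: "'a::field^4^4"
  assumes char: "CHAR('a) = 2" and MN: "M ** N = mat 1" and NM: "N ** M = mat 1"
    and M: "\<And>r s. M$r$s \<in> GFq (2^h)" and N: "\<And>r s. N$r$s \<in> GFq (2^h)" and "i \<noteq> j"
    and F: "\<And>v. F v = binary_form \<alpha> \<beta> \<gamma> ((N *v v)$i) ((N *v v)$j)"
    and aniso: "anisotropic_over (GFq (2^h)) \<alpha> \<beta> \<gamma>"
  shows "points_form_line (GFq (2^h)) F"
proof -
  let ?K = "GFq (2^h) :: 'a set"
  have Nv: "(N *v v)$r \<in> ?K" if "\<And>k. v$k \<in> ?K" for v r
    using matrix_vector_mult_GFq[OF char N that] .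
  have zeros: "F v = 0 \<longleftrightarrow> (N *v v)$i = 0 \<and> (N *v v)$j = 0" if "\<And>k. v$k \<in> ?K" for v
    using aniso Nv[OF that] by (auto simp: F anisotropic_over_def binary_form_def)
  have "card (UNIV - {i, j} :: 4 set) = 2"
    using \<open>i \<noteq> j\<close> by (simp add: card_Diff_subset)
  then obtain k l where "k \<noteq> l" and kl: "UNIV - {i, j} = {k, l}"
    by (auto simp: card_2_iff)
  define u w where "u = M *v axis k 1" and "w = M *v axis l 1"
  have uw: "u$r \<in> ?K" "w$r \<in> ?K" for r
    using M by (simp_all add: u_def w_def matrix_vector_mult_axis)
  have N_comb: "N *v (s *s u + t *s w) = s *s axis k 1 + t *s axis l 1" for s t
    by (simp add: u_def w_def matrix_vector_right_distrib vector_scalar_commute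
        matrix_vector_mul_assoc NM)
  have independent: "s = 0 \<and> t = 0" if "s *s u + t *s w = 0" for s t
  proof -
    have "s *s axis k 1 + t *s axis l 1 = 0"
      using N_comb[of s t] that by simp
    then have "(s *s axis k 1 + t *s axis l 1)$k = 0" "(s *s axis k 1 + t *s axis l 1)$l = 0"
      by simp_all
    with \<open>k \<noteq> l\<close> show ?thesis
      by (simp add: axis_def)
  qed
  have decompose: "v = (N *v v)$k *s u + (N *v v)$l *s w"
    if "(N *v v)$i = 0" and "(N *v v)$j = 0" for v
  proof -
    have "N *v v = (N *v v)$k *s axis k 1 + (N *v v)$l *s axis l 1"
      using that kl \<open>k \<noteq> l\<close> by (auto simp: vec_eq_iff axis_def)
    then have "M *v (N *v v) = M *v ((N *v v)$k *s axis k 1 + (N *v v)$l *s axis l 1)"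
      by (rule arg_cong)
    also have "\<dots> = (N *v v)$k *s u + (N *v v)$l *s w"
      by (simp add: u_def w_def matrix_vector_right_distrib vector_scalar_commute)
    finally show ?thesis
      by (simp add: matrix_vector_mul_assoc MN)
  qed
  have comb: "(\<chi> r. s * u$r + t * w$r) = s *s u + t *s w" for s t
    by (simp add: vec_eq_iff)
  show ?thesis
    unfolding points_form_line_def
  proof (rule exI[of _ u], rule exI[of _ w], intro conjI allI impI)
    show "u$r \<in> ?K" "w$r \<in> ?K" for r by (fact uw)+
    show "s = 0" "t = 0" if "s \<in> ?K" "t \<in> ?K" "(\<chi> r. s * u$r + t * w$r) = 0" for s t
      using independent that(3) by (simp_all add: comb)
    show "{v. (\<forall>k. v$k \<in> ?K) \<and> v \<noteq> 0 \<and> F v = 0} =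
        {(\<chi> r. s * u$r + t * w$r) |s t. s \<in> ?K \<and> t \<in> ?K \<and> (s \<noteq> 0 \<or> t \<noteq> 0)}"
      unfolding comb
    proof (intro equalityI subsetI)
      fix v assume "v \<in> {v. (\<forall>k. v$k \<in> ?K) \<and> v \<noteq> 0 \<and> F v = 0}"
      then have v: "\<And>k. v$k \<in> ?K" and "v \<noteq> 0" and "F v = 0"
        by auto
      then have v_dec: "v = (N *v v)$k *s u + (N *v v)$l *s w"
        using zeros decompose by blast
      with \<open>v \<noteq> 0\<close> have "(N *v v)$k \<noteq> 0 \<or> (N *v v)$l \<noteq> 0"
        by auto
      with v_dec Nv[OF v] show "v \<in> {s *s u + t *s w |s t. s \<in> ?K \<and> t \<in> ?K \<and> (s \<noteq> 0 \<or> t \<noteq> 0)}"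
        by blast
    next
      fix v assume "v \<in> {s *s u + t *s w |s t. s \<in> ?K \<and> t \<in> ?K \<and> (s \<noteq> 0 \<or> t \<noteq> 0)}"
      then obtain s t where v: "v = s *s u + t *s w" and "s \<in> ?K" "t \<in> ?K" "s \<noteq> 0 \<or> t \<noteq> 0"
        by blast
      have v_K: "\<forall>r. v$r \<in> ?K"
        using \<open>s \<in> ?K\<close> \<open>t \<in> ?K\<close> uw by (simp add: v GFq_add[OF char] GFq_mult)
      moreover have "v \<noteq> 0"
        using independent[of s t] \<open>s \<noteq> 0 \<or> t \<noteq> 0\<close> v by auto
      moreover have "(N *v v)$i = 0" "(N *v v)$j = 0"
        using kl by (auto simp: v N_comb axis_def)
      then have "F v = 0"
        using zeros v_K by blast
      ultimately show "v \<in> {v. (\<forall>k. v$k \<in> ?K) \<and> v \<noteq> 0 \<and> F v = 0}"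
        by blast
    qed
  qed
qed

section \<open>The quadric \<open>\<Xi>\<^sub>\<infinity>\<close>\<close>

lemma Xi_form_quadratic:
  "Xi_form a0 a1 b0 b1 c0 c1 \<nu> (s *s U + t *s V)
     = s\<^sup>2 * Xi_form a0 a1 b0 b1 c0 c1 \<nu> U
     + s * t * (Xi_form a0 a1 b0 b1 c0 c1 \<nu> (U + V) - Xi_form a0 a1 b0 b1 c0 c1 \<nu> U
                - Xi_form a0 a1 b0 b1 c0 c1 \<nu> V)
     + t\<^sup>2 * Xi_form a0 a1 b0 b1 c0 c1 \<nu> V"
  by (simp add: Xi_form_def algebra_simps power2_eq_square)

lemma Xi_form_GFq:
  fixes \<nu> :: "'a::field"
  assumes char: "CHAR('a) = 2"
    and "a0 \<in> GFq (2^h)" "a1 \<in> GFq (2^h)" "b0 \<in> GFq (2^h)" "b1 \<in> GFq (2^h)"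
        "c0 \<in> GFq (2^h)" "c1 \<in> GFq (2^h)" "\<nu> \<in> GFq (2^h)"
    and "\<And>k. v$k \<in> GFq (2^h)"
  shows "Xi_form a0 a1 b0 b1 c0 c1 \<nu> v \<in> GFq (2^h)"
  unfolding Xi_form_def using assms by (intro GFq_add[OF char] GFq_mult GFq_power GFq_one) auto

lemma no_common_point_at_infinity:
  fixes x y :: "'a::field"
  assumes inf_cap: "{v. v \<noteq> 0 \<and> v$1 = 0 \<and> Q_form a b c d e f v = 0 \<and> H_form q v = 0}
                  = {v. v \<noteq> 0 \<and> v$1 = 0 \<and> v$2 = 0 \<and> v$3 = 0}"
    and Q: "binary_form a c b x y = 0" and H: "x * x ^ q + y * y ^ q = 0"
  shows "x = 0 \<and> y = 0"
proof (rule ccontr)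
  assume nonzero: "\<not> (x = 0 \<and> y = 0)"
  define v :: "'a^4" where "v = (\<chi> k. if k = 2 then x else if k = 3 then y else 0)"
  have v_nth: "v$1 = 0" "v$2 = x" "v$3 = y" "v$4 = 0"
    by (simp_all add: v_def)
  have "v \<noteq> 0"
    using nonzero v_nth by auto
  moreover have "Q_form a b c d e f v = 0"
    using Q by (simp add: Q_form_def binary_form_def v_nth algebra_simps)
  moreover have "H_form q v = - (x * x ^ q + y * y ^ q)"
    by (simp add: H_form_def v_nth power_Suc)
  then have "H_form q v = 0"
    by (simp add: H)
  ultimately have "v$2 = 0 \<and> v$3 = 0"
    using inf_cap v_nth by blast
  with nonzero v_nth show False
    by simp
qed

locale GF_quadratic_extension =
  fixes h :: nat and \<nu> \<epsilon> :: "'a::field"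
  assumes CHAR_2: "CHAR('a) = 2"
    and \<nu>_GFq: "\<nu> \<in> GFq (2^h)"
    and \<epsilon>_not_GFq: "\<epsilon> \<notin> GFq (2^h)"
    and \<epsilon>_root: "\<epsilon>\<^sup>2 + \<epsilon> + \<nu> = 0"
begin

lemma two_eq_zero: "(2::'a) = 0"
  by (rule two_eq_zero_if_CHAR_2[OF CHAR_2])

lemma h_pos: "0 < h"
  using \<epsilon>_not_GFq by (cases h) (simp_all add: GFq_def)

lemma \<nu>_eq: "\<nu> = \<epsilon>\<^sup>2 + \<epsilon>"
proof -
  have "\<nu> + (\<epsilon>\<^sup>2 + \<epsilon>) = 0"
    using \<epsilon>_root by (simp add: ac_simps)
  then have "\<nu> = - (\<epsilon>\<^sup>2 + \<epsilon>)"
    by (simp only: eq_neg_iff_add_eq_0)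
  then show ?thesis
    by (simp only: uminus_CHAR_2[OF CHAR_2])
qed

lemma \<epsilon>_frobenius: "\<epsilon> ^ 2 ^ h = \<epsilon> + 1"
proof -
  define r where "r = \<epsilon> ^ 2 ^ h"
  have "(\<epsilon>\<^sup>2 + \<epsilon> + \<nu>) ^ 2 ^ h = r\<^sup>2 + r + \<nu>"
    using \<nu>_GFq by (simp add: power_two_power_add[OF CHAR_2] power2_power_commute r_def GFq_def)
  then have "r\<^sup>2 + r + \<nu> = 0"
    by (simp add: \<epsilon>_root power_0_left)
  then have "(r + \<epsilon>) * (r + \<epsilon> + 1) = 0"
    unfolding \<nu>_eq by (simp add: algebra_simps power2_eq_square two_eq_zero)
  moreover have "r + \<epsilon> \<noteq> 0"
  proof
    assume "r + \<epsilon> = 0"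
    then have "r = \<epsilon>"
      by (simp add: add_eq_0_iff2 uminus_CHAR_2[OF CHAR_2])
    with \<epsilon>_not_GFq show False
      by (simp add: r_def GFq_def)
  qed
  ultimately have "r + (\<epsilon> + 1) = 0"
    by (simp add: add.assoc)
  then show ?thesis
    by (simp add: r_def add_eq_0_iff2 uminus_CHAR_2[OF CHAR_2])
qed

lemma GFq_plus_\<epsilon>_eq_0_iff:
  assumes "x \<in> GFq (2^h)" and "y \<in> GFq (2^h)"
  shows "x + y * \<epsilon> = 0 \<longleftrightarrow> x = 0 \<and> y = 0"
proof
  assume sum: "x + y * \<epsilon> = 0"
  show "x = 0 \<and> y = 0"
  proof (cases "y = 0")
    case False
    then have "\<epsilon> = - x / y"
      using sum by (simp add: field_simps add_eq_0_iff2)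
    then have "\<epsilon> \<in> GFq (2^h)"
      using assms by (simp add: GFq_divide GFq_uminus[OF CHAR_2])
    with \<epsilon>_not_GFq show ?thesis ..
  qed (use sum in simp)
qed simp

lemma frobenius_GFq_plus_\<epsilon>:
  assumes "x \<in> GFq (2^h)" and "y \<in> GFq (2^h)"
  shows "(x + y * \<epsilon>) ^ 2 ^ h = x + y * (\<epsilon> + 1)"
  using assms by (simp add: power_two_power_add[OF CHAR_2] power_mult_distrib \<epsilon>_frobenius GFq_def)

definition xcoord :: "'a^4 \<Rightarrow> 'a" where
  "xcoord u = u$1 + u$2 * \<epsilon>"

definition ycoord :: "'a^4 \<Rightarrow> 'a" where
  "ycoord u = u$3 + u$4 * \<epsilon>"

text \<open>Multiplication by \<open>\<epsilon>\<close> on \<open>GF(q\<^sup>2)\<^sup>2\<close>, in the coordinates \<open>xcoord\<close>, \<open>ycoord\<close> over \<open>GF(q)\<close>.\<close>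
definition eps_times :: "'a^4 \<Rightarrow> 'a^4" where
  "eps_times u = (\<chi> k. if k = 1 then \<nu> * u$2 else if k = 2 then u$1 + u$2
                        else if k = 3 then \<nu> * u$4 else u$3 + u$4)"

lemma eps_times_nth [simp]:
  "eps_times u $ 1 = \<nu> * u$2" "eps_times u $ 2 = u$1 + u$2"
  "eps_times u $ 3 = \<nu> * u$4" "eps_times u $ 4 = u$3 + u$4"
  by (simp_all add: eps_times_def)

lemma coord_eps_times:
  "xcoord (eps_times u) = \<epsilon> * xcoord u" "ycoord (eps_times u) = \<epsilon> * ycoord u"
  unfolding xcoord_def ycoord_def eps_times_nth
  by (simp_all add: \<nu>_eq algebra_simps power2_eq_square two_eq_zero)

lemma Xi_form_conjugate_identity:
  "Xi_form a0 a1 b0 b1 c0 c1 \<nu> u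
     = binary_form (a0 + a1 * \<epsilon>) (c0 + c1 * \<epsilon>) (b0 + b1 * \<epsilon>) (u$1 + u$2 * \<epsilon>) (u$3 + u$4 * \<epsilon>)
     + binary_form (a0 + a1 * (\<epsilon> + 1)) (c0 + c1 * (\<epsilon> + 1)) (b0 + b1 * (\<epsilon> + 1))
         (u$1 + u$2 * (\<epsilon> + 1)) (u$3 + u$4 * (\<epsilon> + 1))
     + (u$1 + u$2 * \<epsilon>) * (u$1 + u$2 * (\<epsilon> + 1)) + (u$3 + u$4 * \<epsilon>) * (u$3 + u$4 * (\<epsilon> + 1))"
  unfolding Xi_form_def binary_form_def \<nu>_eq
  by (simp add: algebra_simps power2_eq_square two_eq_zero)

lemma eps_times_GFq:
  assumes "\<And>k. u$k \<in> GFq (2^h)"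
  shows "eps_times u $ k \<in> GFq (2^h)"
  unfolding eps_times_def using assms \<nu>_GFq by (simp add: GFq_mult GFq_add[OF CHAR_2])

lemma Xi_form_trace_norm:
  assumes coeffs: "a0 \<in> GFq (2^h)" "a1 \<in> GFq (2^h)" "b0 \<in> GFq (2^h)" "b1 \<in> GFq (2^h)"
      "c0 \<in> GFq (2^h)" "c1 \<in> GFq (2^h)"
    and u: "\<And>k. u$k \<in> GFq (2^h)"
  defines "Q \<equiv> binary_form (a0 + a1 * \<epsilon>) (c0 + c1 * \<epsilon>) (b0 + b1 * \<epsilon>) (xcoord u) (ycoord u)"
  shows "Xi_form a0 a1 b0 b1 c0 c1 \<nu> u
    = Q + Q ^ 2 ^ h + xcoord u * xcoord u ^ 2 ^ h + ycoord u * ycoord u ^ 2 ^ h"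
  unfolding Q_def binary_form_power_two_power[OF CHAR_2] xcoord_def ycoord_def
  using coeffs u by (simp add: frobenius_GFq_plus_\<epsilon> Xi_form_conjugate_identity)

lemma Xi_form_scaled:
  assumes coeffs: "a0 \<in> GFq (2^h)" "a1 \<in> GFq (2^h)" "b0 \<in> GFq (2^h)" "b1 \<in> GFq (2^h)"
      "c0 \<in> GFq (2^h)" "c1 \<in> GFq (2^h)"
    and u: "\<And>k. u$k \<in> GFq (2^h)" and u': "\<And>k. u'$k \<in> GFq (2^h)"
    and scaled: "xcoord u' = c * xcoord u" "ycoord u' = c * ycoord u"
  defines "Q \<equiv> binary_form (a0 + a1 * \<epsilon>) (c0 + c1 * \<epsilon>) (b0 + b1 * \<epsilon>) (xcoord u) (ycoord u)"
    and "N \<equiv> xcoord u * xcoord u ^ 2 ^ h + ycoord u * ycoord u ^ 2 ^ h"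
  shows "Xi_form a0 a1 b0 b1 c0 c1 \<nu> u' = c\<^sup>2 * Q + (c ^ 2 ^ h)\<^sup>2 * Q ^ 2 ^ h + c * c ^ 2 ^ h * N"
proof -
  have "Xi_form a0 a1 b0 b1 c0 c1 \<nu> u' = c\<^sup>2 * Q + (c\<^sup>2 * Q) ^ 2 ^ h
      + c * xcoord u * (c * xcoord u) ^ 2 ^ h + c * ycoord u * (c * ycoord u) ^ 2 ^ h"
    using Xi_form_trace_norm[OF coeffs u'] by (simp add: scaled binary_form_scale Q_def)
  then show ?thesis
    by (simp add: N_def power_mult_distrib power2_power_commute algebra_simps)
qed

lemma Xi_form_zero_on_eps_line:
  assumes coeffs: "a0 \<in> GFq (2^h)" "a1 \<in> GFq (2^h)" "b0 \<in> GFq (2^h)" "b1 \<in> GFq (2^h)"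
      "c0 \<in> GFq (2^h)" "c1 \<in> GFq (2^h)"
    and u: "\<And>k. u$k \<in> GFq (2^h)"
    and zeros: "Xi_form a0 a1 b0 b1 c0 c1 \<nu> u = 0" "Xi_form a0 a1 b0 b1 c0 c1 \<nu> (eps_times u) = 0"
      "Xi_form a0 a1 b0 b1 c0 c1 \<nu> (u + eps_times u) = 0"
  shows "binary_form (a0 + a1 * \<epsilon>) (c0 + c1 * \<epsilon>) (b0 + b1 * \<epsilon>) (xcoord u) (ycoord u) = 0"
    and "xcoord u * xcoord u ^ 2 ^ h + ycoord u * ycoord u ^ 2 ^ h = 0"
proof -
  define Q where "Q = binary_form (a0 + a1 * \<epsilon>) (c0 + c1 * \<epsilon>) (b0 + b1 * \<epsilon>) (xcoord u) (ycoord u)"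
  define N where "N = xcoord u * xcoord u ^ 2 ^ h + ycoord u * ycoord u ^ 2 ^ h"
  have \<epsilon>u: "eps_times u $ k \<in> GFq (2^h)" for k
    using u by (rule eps_times_GFq)
  have "(1 + \<epsilon>) ^ 2 ^ h = \<epsilon> + (1 + 1)"
    by (simp only: power_two_power_add[OF CHAR_2] \<epsilon>_frobenius power_one ac_simps)
  then have "(1 + \<epsilon>) ^ 2 ^ h = \<epsilon>"
    by (simp add: two_eq_zero)
  have E1: "Q + Q ^ 2 ^ h + N = 0"
    using Xi_form_trace_norm[OF coeffs u] zeros(1) by (simp add: Q_def N_def add.assoc)
  have sum_coords: "xcoord (u + eps_times u) = (1 + \<epsilon>) * xcoord u"
    "ycoord (u + eps_times u) = (1 + \<epsilon>) * ycoord u"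
    using coord_eps_times[of u] by (simp_all add: xcoord_def ycoord_def algebra_simps)
  have sum_GFq: "(u + eps_times u) $ k \<in> GFq (2^h)" for k
    using u \<epsilon>u by (simp add: GFq_add[OF CHAR_2])
  have "Xi_form a0 a1 b0 b1 c0 c1 \<nu> (u + eps_times u)
      = (1 + \<epsilon>)\<^sup>2 * Q + \<epsilon>\<^sup>2 * Q ^ 2 ^ h + (1 + \<epsilon>) * \<epsilon> * N"
    unfolding Q_def N_def using Xi_form_scaled[OF coeffs u sum_GFq sum_coords]
      \<open>(1 + \<epsilon>) ^ 2 ^ h = \<epsilon>\<close> by simp
  with zeros(3) have E3: "(1 + \<epsilon>)\<^sup>2 * Q + \<epsilon>\<^sup>2 * Q ^ 2 ^ h + (1 + \<epsilon>) * \<epsilon> * N = 0"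
    by simp
  have "Xi_form a0 a1 b0 b1 c0 c1 \<nu> (eps_times u)
      = \<epsilon>\<^sup>2 * Q + (\<epsilon> + 1)\<^sup>2 * Q ^ 2 ^ h + \<epsilon> * (\<epsilon> + 1) * N"
    unfolding Q_def N_def using Xi_form_scaled[OF coeffs u \<epsilon>u coord_eps_times] \<epsilon>_frobenius by simp
  with zeros(2) have E2: "\<epsilon>\<^sup>2 * Q + (\<epsilon> + 1)\<^sup>2 * Q ^ 2 ^ h + \<epsilon> * (\<epsilon> + 1) * N = 0"
    by simp
  have "Q + Q ^ 2 ^ h
      = (\<epsilon>\<^sup>2 * Q + (\<epsilon> + 1)\<^sup>2 * Q ^ 2 ^ h + \<epsilon> * (\<epsilon> + 1) * N)
      + ((1 + \<epsilon>)\<^sup>2 * Q + \<epsilon>\<^sup>2 * Q ^ 2 ^ h + (1 + \<epsilon>) * \<epsilon> * N)"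
    by (simp add: algebra_simps power2_eq_square two_eq_zero)
  then have trace: "Q + Q ^ 2 ^ h = 0"
    by (simp add: E2 E3)
  with E1 show "N = 0" by simp
  from trace have "Q ^ 2 ^ h = Q"
    by (simp add: add_eq_0_iff2 uminus_CHAR_2[OF CHAR_2])
  moreover have "Q = \<epsilon>\<^sup>2 * Q + (\<epsilon> + 1)\<^sup>2 * Q + \<epsilon> * (\<epsilon> + 1) * N"
    using \<open>N = 0\<close> by (simp add: algebra_simps power2_eq_square two_eq_zero)
  ultimately show "Q = 0"
    using E2 by simp
qed

lemma Xi_form_zeros_contain_no_plane:
  assumes finite: "finite (UNIV :: 'a set)"
    and coeffs: "a0 \<in> GFq (2^h)" "a1 \<in> GFq (2^h)" "b0 \<in> GFq (2^h)" "b1 \<in> GFq (2^h)"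
      "c0 \<in> GFq (2^h)" "c1 \<in> GFq (2^h)"
    and no_common_point: "\<And>x y. binary_form (a0 + a1 * \<epsilon>) (c0 + c1 * \<epsilon>) (b0 + b1 * \<epsilon>) x y = 0 \<Longrightarrow>
        x * x ^ 2 ^ h + y * y ^ 2 ^ h = 0 \<Longrightarrow> x = 0 \<and> y = 0"
  shows "zeros_contain_no_plane (GFq (2^h)) (Xi_form a0 a1 b0 b1 c0 c1 \<nu>)"
  unfolding zeros_contain_no_plane_def
proof (intro allI impI)
  fix L :: "'a^4"
  assume L: "\<forall>k. L$k \<in> GFq (2^h)"
  define L' :: "'a^4" where "L' = (\<chi> k. if k = 1 then L$2 else if k = 2 then \<nu> * L$1 + L$2
                                     else if k = 3 then L$4 else \<nu> * L$3 + L$4)"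
  have L'_nth: "L'$1 = L$2" "L'$2 = \<nu> * L$1 + L$2" "L'$3 = L$4" "L'$4 = \<nu> * L$3 + L$4"
    by (simp_all add: L'_def)
  have L'_GFq: "L'$k \<in> GFq (2^h)" for k
    using L \<nu>_GFq by (simp add: L'_def GFq_mult GFq_add[OF CHAR_2])
  have lin_eps: "lin_form L (eps_times u) = lin_form L' u" for u
    by (simp add: lin_form_def sum_4 L'_nth algebra_simps)
  obtain u where u: "\<And>k. u$k \<in> GFq (2^h)" and "u \<noteq> 0"
    and "lin_form L u = 0" and "lin_form L' u = 0"
    using two_lin_forms_common_zero[OF finite CHAR_2, where L = L and L' = L'] L L'_GFq by blast
  then have on_plane: "lin_form L u = 0" "lin_form L (eps_times u) = 0"
    "lin_form L (u + eps_times u) = 0"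
    by (simp_all add: lin_eps lin_form_add)
  have in_GFq: "\<forall>k. v$k \<in> GFq (2^h)" if "v \<in> {u, eps_times u, u + eps_times u}" for v
    using that u eps_times_GFq[OF u] by (auto simp: GFq_add[OF CHAR_2])
  show "\<exists>v. (\<forall>k. v$k \<in> GFq (2^h)) \<and> lin_form L v = 0 \<and> Xi_form a0 a1 b0 b1 c0 c1 \<nu> v \<noteq> 0"
  proof (rule ccontr)
    assume "\<not> ?thesis"
    then have "Xi_form a0 a1 b0 b1 c0 c1 \<nu> v = 0" if "v \<in> {u, eps_times u, u + eps_times u}" for v
      using that on_plane in_GFq by blast
    then have "xcoord u = 0 \<and> ycoord u = 0"
      using no_common_point[OF Xi_form_zero_on_eps_line[OF coeffs u]] by blast
    then have "u = 0"
      using u by (simp add: xcoord_def ycoord_def GFq_plus_\<epsilon>_eq_0_iff vec_eq_iff forall_4)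
    with \<open>u \<noteq> 0\<close> show False ..
  qed
qed

text \<open>An anisotropic form over \<open>GF(q)\<close> splits over \<open>GF(q\<^sup>2)\<close> into two linear factors
  exchanged by the Frobenius map: with \<open>\<delta> = \<alpha>\<gamma>/\<beta>\<^sup>2\<close> of trace one, the root \<open>\<rho>\<close> of
  \<open>\<alpha> \<rho>\<^sup>2 + \<beta> \<rho> = \<gamma>\<close> is \<open>\<beta>(\<epsilon> + \<mu>)/\<alpha>\<close>, where \<open>\<mu>\<^sup>2 + \<mu> = \<delta> + \<nu>\<close>.\<close>
lemma anisotropic_binary_form_factors:
  fixes \<alpha> \<beta> \<gamma> :: 'a
  assumes trace_\<nu>: "abs_trace h \<nu> = 1"
    and \<alpha>: "\<alpha> \<in> GFq (2^h)" and \<beta>: "\<beta> \<in> GFq (2^h)" and \<gamma>: "\<gamma> \<in> GFq (2^h)"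
    and aniso: "anisotropic_over (GFq (2^h)) \<alpha> \<beta> \<gamma>"
  obtains \<rho> where "\<alpha> \<noteq> 0" "\<rho> ^ 2 ^ h \<noteq> \<rho>"
    "\<And>s t. binary_form \<alpha> \<beta> \<gamma> s t = \<alpha> * (s + \<rho> * t) * (s + \<rho> ^ 2 ^ h * t)"
proof -
  have \<alpha>0: "\<alpha> \<noteq> 0" and \<beta>0: "\<beta> \<noteq> 0"
    using anisotropic_binary_form_coeffs_nonzero[OF CHAR_2 h_pos \<alpha> \<gamma> aniso] by simp_all
  define \<delta> where "\<delta> = \<alpha> * \<gamma> / \<beta>\<^sup>2"
  define \<mu> where "\<mu> = (\<Sum>k<h. (\<Sum>i<k. \<nu> ^ 2 ^ i) * \<delta> ^ 2 ^ k)"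
  have \<delta>_GFq: "\<delta> \<in> GFq (2^h)"
    using \<alpha> \<beta> \<gamma> by (simp add: \<delta>_def GFq_mult GFq_divide GFq_power)
  have "abs_trace h \<delta> = 1"
    unfolding \<delta>_def by (rule anisotropic_binary_form_trace[OF CHAR_2 h_pos \<nu>_GFq trace_\<nu> \<alpha> \<beta> \<gamma> aniso])
  then have \<mu>_square: "\<mu>\<^sup>2 = \<mu> + \<delta> + \<nu>"
    using artin_schreier_sum[OF CHAR_2 \<delta>_GFq, of \<nu>] trace_\<nu> by (simp add: \<mu>_def)
  have \<mu>_GFq: "\<mu> \<in> GFq (2^h)"
    unfolding \<mu>_def using \<nu>_GFq \<delta>_GFq by (intro GFq_sum[OF CHAR_2] GFq_mult GFq_power)
  define \<rho> where "\<rho> = \<beta> * (\<epsilon> + \<mu>) / \<alpha>"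
  have \<rho>_conj: "\<rho> ^ 2 ^ h = \<rho> + \<beta> / \<alpha>"
  proof -
    have "\<rho> ^ 2 ^ h = \<beta> * (\<epsilon> + 1 + \<mu>) / \<alpha>"
      using \<alpha> \<beta> \<mu>_GFq by (simp add: \<rho>_def power_divide power_mult_distrib
          power_two_power_add[OF CHAR_2] \<epsilon>_frobenius GFq_def)
    also have "\<dots> = \<rho> + \<beta> / \<alpha>"
      using \<alpha>0 by (simp add: \<rho>_def field_simps)
    finally show ?thesis .
  qed
  have \<rho>_root: "\<alpha> * \<rho>\<^sup>2 + \<beta> * \<rho> = \<gamma>"
  proof -
    have "\<alpha> * \<rho>\<^sup>2 + \<beta> * \<rho> = \<beta>\<^sup>2 / \<alpha> * ((\<epsilon> + \<mu>)\<^sup>2 + (\<epsilon> + \<mu>))"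
      using \<alpha>0 by (simp add: \<rho>_def field_simps power2_eq_square)
    also have "(\<epsilon> + \<mu>)\<^sup>2 + (\<epsilon> + \<mu>)
        = \<delta> + (\<epsilon>\<^sup>2 + \<epsilon> + \<nu>) + (\<mu>\<^sup>2 - (\<mu> + \<delta> + \<nu>)) + 2 * (\<epsilon> * \<mu> + \<mu>)"
      by (simp add: algebra_simps power2_eq_square)
    also have "\<dots> = \<delta>"
      by (simp add: \<epsilon>_root \<mu>_square two_eq_zero)
    also have "\<beta>\<^sup>2 / \<alpha> * \<delta> = \<gamma>"
      using \<alpha>0 \<beta>0 by (simp add: \<delta>_def field_simps power2_eq_square)
    finally show ?thesis .
  qed
  show thesis
  proof (rule that)
    show "\<alpha> \<noteq> 0" by fact
    show "\<rho> ^ 2 ^ h \<noteq> \<rho>"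
      using \<rho>_conj \<alpha>0 \<beta>0 by simp
    show "binary_form \<alpha> \<beta> \<gamma> s t = \<alpha> * (s + \<rho> * t) * (s + \<rho> ^ 2 ^ h * t)" for s t
    proof -
      have "\<alpha> * (s + \<rho> * t) * (s + (\<rho> + \<beta> / \<alpha>) * t)
          = \<alpha> * s\<^sup>2 + \<beta> * s * t + (\<alpha> * \<rho>\<^sup>2 + \<beta> * \<rho>) * t\<^sup>2 + 2 * (\<alpha> * \<rho> * s * t)"
        using \<alpha>0 by (simp add: field_simps power2_eq_square)
      then show ?thesis
        by (simp add: binary_form_def \<rho>_conj \<rho>_root two_eq_zero)
    qed
  qed
qed

end

theorem lemma6:
  fixes q h :: nat
    and nu eps a b c d e f a0 a1 b0 b1 c0 c1 :: "'b::{field,finite}"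
  assumes q_def: "q = 2 ^ h" and h_pos: "h \<ge> 1"
    and card_F: "CARD('b) = q ^ 2"
    and nu_q: "nu \<in> GFq q" and nu_ne1: "nu \<noteq> 1" and trace_nu: "abs_trace h nu = 1"
    and eps_notq: "eps \<notin> GFq q" and eps_eq: "eps ^ 2 + eps + nu = 0"
    and a_split: "a0 \<in> GFq q" "a1 \<in> GFq q" "a = a0 + a1 * eps"
    and b_split: "b0 \<in> GFq q" "b1 \<in> GFq q" "b = b0 + b1 * eps"
    and c_split: "c0 \<in> GFq q" "c1 \<in> GFq q" "c = c0 + c1 * eps"
    and hyp: "hyperbolic_quadric (Q_form a b c d e f)"
    and inf_cap: "{v. v \<noteq> 0 \<and> v$1 = 0 \<and> Q_form a b c d e f v = 0 \<and> H_form q v = 0}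
                  = {v. v \<noteq> 0 \<and> v$1 = 0 \<and> v$2 = 0 \<and> v$3 = 0}"
    and rank2: "quadric_rank (GFq q) (Xi_form a0 a1 b0 b1 c0 c1 nu) = 2"
  shows "conjugate_planes q (GFq q) (Xi_form a0 a1 b0 b1 c0 c1 nu) \<and>
         points_form_line (GFq q) (Xi_form a0 a1 b0 b1 c0 c1 nu)"
proof -
  have char: "CHAR('b) = 2"
    using card_F q_def by (intro CHAR_eq_2_if_card_power_of_2[of "h * 2"]) (metis power_mult)
  interpret GF_quadratic_extension h nu eps
    using char nu_q eps_notq eps_eq q_def by unfold_locales simp_all
  have coeffs: "a0 \<in> GFq (2^h)" "a1 \<in> GFq (2^h)" "b0 \<in> GFq (2^h)" "b1 \<in> GFq (2^h)"
    "c0 \<in> GFq (2^h)" "c1 \<in> GFq (2^h)"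
    using a_split b_split c_split q_def by simp_all
  let ?Xi = "Xi_form a0 a1 b0 b1 c0 c1 nu"
  have no_plane: "zeros_contain_no_plane (GFq (2^h)) ?Xi"
  proof (rule Xi_form_zeros_contain_no_plane[OF finite_class.finite_UNIV coeffs])
    show "x = 0 \<and> y = 0"
      if "binary_form (a0 + a1 * eps) (c0 + c1 * eps) (b0 + b1 * eps) x y = 0"
        and "x * x ^ 2 ^ h + y * y ^ 2 ^ h = 0" for x y
      using no_common_point_at_infinity[OF inf_cap] that a_split(3) b_split(3) c_split(3) q_def
      by blast
  qed
  obtain M N :: "'b^4^4" and i j \<alpha> \<beta> \<gamma> where MN: "M ** N = mat 1" and NM: "N ** M = mat 1"
    and M: "\<And>r s. M$r$s \<in> GFq (2^h)" and N: "\<And>r s. N$r$s \<in> GFq (2^h)" and "i \<noteq> j"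
    and coeffs_\<alpha>\<beta>\<gamma>: "\<alpha> \<in> GFq (2^h)" "\<beta> \<in> GFq (2^h)" "\<gamma> \<in> GFq (2^h)"
    and Xi_eq: "\<And>v. ?Xi v = binary_form \<alpha> \<beta> \<gamma> ((N *v v)$i) ((N *v v)$j)"
    using rank_two_normal_form[OF char _ Xi_form_GFq[OF char coeffs \<nu>_GFq] Xi_form_quadratic]
      rank2 q_def by metis
  have aniso: "anisotropic_over (GFq (2^h)) \<alpha> \<beta> \<gamma>"
    using anisotropic_if_zeros_contain_no_plane[OF char N Xi_eq no_plane] .
  obtain \<rho> where "\<alpha> \<noteq> 0" and \<rho>: "\<rho> ^ 2 ^ h \<noteq> \<rho>"
    and factors: "\<And>s t. binary_form \<alpha> \<beta> \<gamma> s t = \<alpha> * (s + \<rho> * t) * (s + \<rho> ^ 2 ^ h * t)"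
    using anisotropic_binary_form_factors[OF trace_nu coeffs_\<alpha>\<beta>\<gamma> aniso] by blast
  have "conjugate_planes (2^h) (GFq (2^h)) ?Xi"
    using Xi_eq factors by (intro conjugate_planes_if_factors[OF char NM N \<open>i \<noteq> j\<close> \<open>\<alpha> \<noteq> 0\<close> \<rho>]) simp
  moreover have "points_form_line (GFq (2^h)) ?Xi"
    by (rule points_form_line_if_anisotropic[OF char MN NM M N \<open>i \<noteq> j\<close> Xi_eq aniso])
  ultimately show ?thesis
    by (simp add: q_def)
qed

end
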